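(* Let $\mathcal{M}\subset\mathbb{R}^n$ be a locally symmetric $C^2$ submanifold with characteristic permutation $\sigma_*$, and let $\sigma\in\Sigma^n$ be a permutation each of whose cycles is contained either in $F:=\mathbb{N}_n\setminus\mathrm{supp}(\sigma_* )$ or in $\mathrm{supp}(\sigma_* )$. Let $\sigma^F$ (resp. $\sigma^M$) be the restriction of $\sigma$ to $F$ (resp. to $\mathrm{supp}(\sigma_* )$), and $\sigma_*^M$ the restriction of $\sigma_*$ to $\mathrm{supp}(\sigma_* )$. Then: $\sigma\sim\sigma_*$ iff $\sigma^F$ is the identity of $F$ and $P(\sigma^M)=P(\sigma_*^M)$; and $\sigma\prec\!\sim\sigma_*$ iff $\sigma^F$ is not the identity of $F$ and $P(\sigma^M)=P(\sigma_*^M)$.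
   Context: $\Sigma^n$ permutations of $\mathbb{N}_n$ acting by $(\sigma x)_i=x_{\sigma^{-1}(i)}$; $\mathrm{supp}(\sigma)$ the set of non-fixed indices; $P(\sigma)$ the partition into orbits of $\sigma$ (also used for permutations of a subset); $P(x)$ partition by equal coordinates; $\Delta(\sigma)=\{x:P(x)=P(\sigma)\}$. $\sigma\sim\sigma'$ means $P(\sigma)=P(\sigma')$; $\sigma\prec\sigma'$ means $P(\sigma')$ refines $P(\sigma)$ (every set of $P(\sigma)$ is a union of sets of $P(\sigma')$) and $P(\sigma)\ne P(\sigma')$. $\sigma\prec\!\sim\sigma'$ means $\sigma\prec\sigma'$ and every set of $P(\sigma)$ that is not a set of $P(\sigma')$ is a union of singleton sets of $P(\sigma')$. $\mathbb{R}^n_\ge=\{x:x_1\ge\cdots\ge x_n\}$; $B$ open ball. A set $S$ is locally symmetric if $S\cap\mathbb{R}^n_\ge\ne\emptyset$ and each $x\in S$ has $\delta>0$ with $\sigma(S\cap B(x,\delta))=S\cap B(x,\delta)$ for all $y\in S\cap B(x,\delta)$, all $\sigma$ with $\sigma y=y$; a locally symmetric $C^2$ submanifold is a connected $C^2$ submanifold without boundary which is locally symmetric. A characteristic permutation is a $\sigma_*$ with $\mathcal{M}\cap B(y,\rho)\subset\Delta(\sigma_* )$ for some $y\in\mathcal{M}$, $\rho>0$. *)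

theory Defs
  imports "HOL-Analysis.Analysis"
begin

text \<open>Index set N_n is modelled by a finite linearly ordered type 'n; vectors are real^'n.\<close>

definition perm_act :: "('n::finite \<Rightarrow> 'n) \<Rightarrow> real^'n \<Rightarrow> real^'n" where
  "perm_act \<sigma> x = (\<chi> i. x $ (inv \<sigma> i))"

definition psupp :: "('n \<Rightarrow> 'n) \<Rightarrow> 'n set" where
  "psupp \<sigma> = {i. \<sigma> i \<noteq> i}"

definition cyc :: "('n \<Rightarrow> 'n) \<Rightarrow> 'n \<Rightarrow> 'n set" where
  "cyc \<sigma> i = {(\<sigma> ^^ k) i | k. True}"

definition orbit_partition_on :: "('n \<Rightarrow> 'n) \<Rightarrow> 'n set \<Rightarrow> 'n set set" where
  "orbit_partition_on \<sigma> S = cyc \<sigma> ` S"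

definition Pperm :: "('n \<Rightarrow> 'n) \<Rightarrow> 'n set set" where
  "Pperm \<sigma> = orbit_partition_on \<sigma> UNIV"

definition perm_restrict :: "('n \<Rightarrow> 'n) \<Rightarrow> 'n set \<Rightarrow> ('n \<Rightarrow> 'n)" where
  "perm_restrict \<sigma> S = (\<lambda>i. if i \<in> S then \<sigma> i else i)"

definition Pvec :: "real^'n \<Rightarrow> 'n set set" where
  "Pvec x = (\<lambda>i. {j. x $ j = x $ i}) ` UNIV"

definition Delta :: "('n::finite \<Rightarrow> 'n) \<Rightarrow> (real^'n) set" where
  "Delta \<sigma> = {x. Pvec x = Pperm \<sigma>}"

definition perm_sim :: "('n \<Rightarrow> 'n) \<Rightarrow> ('n \<Rightarrow> 'n) \<Rightarrow> bool" where
  "perm_sim \<sigma> \<sigma>' \<longleftrightarrow> Pperm \<sigma> = Pperm \<sigma>'"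

definition refines :: "'n set set \<Rightarrow> 'n set set \<Rightarrow> bool" where
  "refines Q P \<longleftrightarrow> (\<forall>A\<in>P. \<exists>B. B \<subseteq> Q \<and> A = \<Union>B)"

definition perm_prec :: "('n \<Rightarrow> 'n) \<Rightarrow> ('n \<Rightarrow> 'n) \<Rightarrow> bool" where
  "perm_prec \<sigma> \<sigma>' \<longleftrightarrow> refines (Pperm \<sigma>') (Pperm \<sigma>) \<and> Pperm \<sigma> \<noteq> Pperm \<sigma>'"

definition perm_prec_sim :: "('n \<Rightarrow> 'n) \<Rightarrow> ('n \<Rightarrow> 'n) \<Rightarrow> bool" where
  "perm_prec_sim \<sigma> \<sigma>' \<longleftrightarrow> perm_prec \<sigma> \<sigma>' \<and>
     (\<forall>A\<in>Pperm \<sigma>. A \<notin> Pperm \<sigma>' \<longrightarrow>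
        (\<exists>B. B \<subseteq> Pperm \<sigma>' \<and> A = \<Union>B \<and> (\<forall>b\<in>B. card b = 1)))"

definition decr_cone :: "(real^'n::{finite,linorder}) set" where
  "decr_cone = {x. \<forall>i j. i \<le> j \<longrightarrow> x $ j \<le> x $ i}"

definition locally_symmetric :: "(real^'n::{finite,linorder}) set \<Rightarrow> bool" where
  "locally_symmetric S \<longleftrightarrow> S \<inter> decr_cone \<noteq> {} \<and>
     (\<forall>x\<in>S. \<exists>\<delta>>0. \<forall>y\<in>S \<inter> ball x \<delta>. \<forall>\<sigma>. \<sigma> permutes UNIV \<and> perm_act \<sigma> y = y \<longrightarrow>
        perm_act \<sigma> ` (S \<inter> ball x \<delta>) = S \<inter> ball x \<delta>)"

definition C2_on :: "'a::euclidean_space set \<Rightarrow> ('a \<Rightarrow> 'b::euclidean_space) \<Rightarrow> bool" where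
  "C2_on U f \<longleftrightarrow> (\<exists>f' f''.
      (\<forall>x\<in>U. (f has_derivative blinfun_apply (f' x)) (at x)) \<and>
      (\<forall>x\<in>U. (f' has_derivative blinfun_apply (f'' x)) (at x)) \<and>
      continuous_on U f'')"

definition C2_submanifold :: "(real^'n) set \<Rightarrow> bool" where
  "C2_submanifold M \<longleftrightarrow> (\<forall>x\<in>M. \<exists>U (\<phi> :: real^'n \<Rightarrow> real^'n) \<psi> L. open U \<and> x \<in> U \<and> open (\<phi> ` U) \<and>
      C2_on U \<phi> \<and> C2_on (\<phi> ` U) \<psi> \<and> (\<forall>u\<in>U. \<psi> (\<phi> u) = u) \<and>
      subspace L \<and> \<phi> ` (M \<inter> U) = \<phi> ` U \<inter> L)"

definition locally_symmetric_C2_submanifold :: "(real^'n::{finite,linorder}) set \<Rightarrow> bool" where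
  "locally_symmetric_C2_submanifold M \<longleftrightarrow> connected M \<and> C2_submanifold M \<and> locally_symmetric M"

definition characteristic_perm :: "(real^'n::finite) set \<Rightarrow> ('n \<Rightarrow> 'n) \<Rightarrow> bool" where
  "characteristic_perm M \<sigma>s \<longleftrightarrow> \<sigma>s permutes UNIV \<and> (\<exists>y\<in>M. \<exists>\<rho>>0. M \<inter> ball y \<rho> \<subseteq> Delta \<sigma>s)"

end

theory Submission
  imports Defs
begin

text \<open>Both partitions are partitions into orbits, so two permutations are
equivalent iff they have the same orbit through every point. Outside the support of
\<sigma>* every orbit of \<sigma>* is a singleton, so there agreement means \<sigma> fixes the point; on
the support it means the restricted orbit partitions agree. For \<open>\<prec>\<sim>\<close> the orbits of \<sigma>
that are not orbits of \<sigma>* must consist of fixed points of \<sigma>*; by the hypothesis on the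
cycles of \<sigma> these are exactly the orbits lying outside the support.\<close>

lemma cyc_self: "i \<in> cyc s i"
  unfolding cyc_def by (auto intro: exI[of _ 0])

lemma cyc_subset:
  assumes "j \<in> cyc s i"
  shows "cyc s j \<subseteq> cyc s i"
proof
  fix x assume "x \<in> cyc s j"
  then obtain a where "x = (s ^^ a) j" unfolding cyc_def by auto
  moreover obtain k where "j = (s ^^ k) i" using assms unfolding cyc_def by auto
  ultimately have "x = (s ^^ (a + k)) i" by (simp add: funpow_add)
  then show "x \<in> cyc s i" unfolding cyc_def by auto
qed

lemma cyc_eq:
  fixes s :: "'n::finite \<Rightarrow> 'n"
  assumes "s permutes UNIV" and "j \<in> cyc s i"
  shows "cyc s j = cyc s i"
proof
  show "cyc s j \<subseteq> cyc s i" using assms(2) by (rule cyc_subset)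
  have "permutation s" using assms(1) by (simp add: permutes_imp_permutation)
  then obtain N where N: "N > 0" "(s ^^ N) i = i" by (rule permutation_self)
  obtain k where k: "j = (s ^^ k) i" using assms(2) unfolding cyc_def by auto
  have "((s ^^ N) ^^ m) i = i" for m by (induction m) (simp_all add: N(2))
  then have "(s ^^ (N * k)) i = i" by (simp add: funpow_mult)
  moreover have "N * k = (N - 1) * k + k" using N(1) by (cases N) simp_all
  ultimately have "(s ^^ ((N - 1) * k)) j = i" by (simp add: k funpow_add)
  then have "i \<in> cyc s j" unfolding cyc_def by blast
  then show "cyc s i \<subseteq> cyc s j" by (rule cyc_subset)
qed

lemma cyc_fixpoint: "s i = i \<Longrightarrow> cyc s i = {i}"
proof -
  assume "s i = i"
  then have "(s ^^ k) i = i" for k by (induction k) auto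
  then show ?thesis unfolding cyc_def by auto
qed

lemma cyc_eq_singleton_iff: "cyc s i = {i} \<longleftrightarrow> s i = i"
proof
  assume "cyc s i = {i}"
  moreover have "s i \<in> cyc s i" unfolding cyc_def by (auto intro!: exI[of _ 1])
  ultimately show "s i = i" by auto
qed (rule cyc_fixpoint)

lemma cyc_eq_at_fixpoint: "t i = i \<Longrightarrow> cyc s i = cyc t i \<longleftrightarrow> s i = i"
  by (simp add: cyc_fixpoint cyc_eq_singleton_iff)

lemma cyc_perm_restrict:
  assumes "cyc s i \<subseteq> S"
  shows "cyc (perm_restrict s S) i = cyc s i"
proof -
  have "(perm_restrict s S ^^ k) i = (s ^^ k) i" for k
  proof (induction k)
    case (Suc k)
    have "(s ^^ k) i \<in> S" using assms unfolding cyc_def by auto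
    with Suc show ?case by (simp add: perm_restrict_def)
  qed simp
  then show ?thesis unfolding cyc_def by auto
qed

lemma cyc_subset_psupp:
  fixes s :: "'n::finite \<Rightarrow> 'n"
  assumes "s permutes UNIV" and "i \<in> psupp s"
  shows "cyc s i \<subseteq> psupp s"
proof
  fix j assume j: "j \<in> cyc s i"
  show "j \<in> psupp s"
  proof (rule ccontr)
    assume "j \<notin> psupp s"
    then have "cyc s i = {j}"
      using cyc_eq[OF assms(1) j] by (simp add: psupp_def cyc_fixpoint)
    then have "cyc s i = {i}" using cyc_self[of i s] by auto
    with assms(2) show False by (simp add: cyc_eq_singleton_iff psupp_def)
  qed
qed

lemma Pperm_eq_range: "Pperm s = range (cyc s)"
  by (simp add: Pperm_def orbit_partition_on_def)

lemma cyc_in_Pperm: "cyc s i \<in> Pperm s"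
  by (simp add: Pperm_eq_range)

lemma Pperm_memD:
  fixes s :: "'n::finite \<Rightarrow> 'n"
  assumes "s permutes UNIV" and "A \<in> Pperm s" and "i \<in> A"
  shows "A = cyc s i"
  using assms cyc_eq[OF assms(1), of i]
  unfolding Pperm_eq_range by auto

lemma cyc_in_Pperm_iff:
  fixes s t :: "'n::finite \<Rightarrow> 'n"
  assumes "t permutes UNIV"
  shows "cyc s i \<in> Pperm t \<longleftrightarrow> cyc s i = cyc t i"
  using Pperm_memD[OF assms _ cyc_self] cyc_in_Pperm by metis

lemma perm_sim_iff_cyc_eq:
  fixes s t :: "'n::finite \<Rightarrow> 'n"
  assumes "t permutes UNIV"
  shows "perm_sim s t \<longleftrightarrow> (\<forall>i. cyc s i = cyc t i)"
proof
  assume "perm_sim s t"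
  then show "\<forall>i. cyc s i = cyc t i"
    using cyc_in_Pperm_iff[OF assms] cyc_in_Pperm unfolding perm_sim_def by metis
qed (simp add: perm_sim_def Pperm_eq_range)

lemma union_of_singleton_orbits_iff:
  fixes t :: "'n::finite \<Rightarrow> 'n"
  assumes "t permutes UNIV"
  shows "(\<exists>B. B \<subseteq> Pperm t \<and> A = \<Union>B \<and> (\<forall>b\<in>B. card b = 1)) \<longleftrightarrow> (\<forall>j\<in>A. t j = j)"
proof
  assume "\<exists>B. B \<subseteq> Pperm t \<and> A = \<Union>B \<and> (\<forall>b\<in>B. card b = 1)"
  then obtain B where B: "B \<subseteq> Pperm t" "A = \<Union>B" "\<forall>b\<in>B. card b = 1" by blast
  show "\<forall>j\<in>A. t j = j"
  proof
    fix j assume "j \<in> A"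
    then obtain b where b: "b \<in> B" "j \<in> b" using B(2) by auto
    then have "b = cyc t j" using B(1) Pperm_memD[OF assms] by blast
    moreover have "b = {j}" using B(3) b by (metis card_1_singletonE singletonD)
    ultimately show "t j = j" by (metis cyc_eq_singleton_iff)
  qed
next
  assume "\<forall>j\<in>A. t j = j"
  then have "{j} \<in> Pperm t" if "j \<in> A" for j
    using that cyc_in_Pperm[of t j] cyc_fixpoint[of t j] by simp
  then have "(\<lambda>j. {j}) ` A \<subseteq> Pperm t" by blast
  then show "\<exists>B. B \<subseteq> Pperm t \<and> A = \<Union>B \<and> (\<forall>b\<in>B. card b = 1)"
    by (intro exI[of _ "(\<lambda>j. {j}) ` A"]) auto
qed

lemma perm_prec_sim_iff_cyc:
  fixes s t :: "'n::finite \<Rightarrow> 'n"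
  assumes "t permutes UNIV"
  shows "perm_prec_sim s t \<longleftrightarrow>
    \<not> perm_sim s t \<and> (\<forall>i. cyc s i = cyc t i \<or> (\<forall>j\<in>cyc s i. t j = j))"
proof -
  note singleton_union = union_of_singleton_orbits_iff[OF assms]
  have exceptional_orbits:
    "(\<forall>A\<in>Pperm s. A \<notin> Pperm t \<longrightarrow> (\<exists>B. B \<subseteq> Pperm t \<and> A = \<Union>B \<and> (\<forall>b\<in>B. card b = 1)))
      \<longleftrightarrow> (\<forall>i. cyc s i = cyc t i \<or> (\<forall>j\<in>cyc s i. t j = j))"
    unfolding singleton_union Pperm_eq_range[of s] by (auto simp: cyc_in_Pperm_iff[OF assms])
  have refinement: "refines (Pperm t) (Pperm s)"
    if orbits: "\<forall>i. cyc s i = cyc t i \<or> (\<forall>j\<in>cyc s i. t j = j)"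
    unfolding refines_def
  proof
    fix A assume "A \<in> Pperm s"
    then obtain i where A: "A = cyc s i" by (auto simp: Pperm_eq_range)
    show "\<exists>B. B \<subseteq> Pperm t \<and> A = \<Union>B"
    proof (cases "cyc s i = cyc t i")
      case True
      then show ?thesis using A cyc_in_Pperm[of t i] by (intro exI[of _ "{A}"]) simp
    next
      case False
      then have "\<forall>j\<in>A. t j = j" using orbits unfolding A by blast
      then obtain B where "B \<subseteq> Pperm t" "A = \<Union>B"
        using singleton_union[of A, THEN iffD2] by auto
      then show ?thesis by auto
    qed
  qed
  show ?thesis
    unfolding perm_prec_sim_def perm_prec_def perm_sim_def exceptional_orbits
    using refinement by blast
qed

lemma orbit_partition_on_restrict_eq_iff:
  fixes s t :: "'n::finite \<Rightarrow> 'n"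
  assumes "t permutes UNIV"
    and "\<forall>i\<in>S. cyc s i \<subseteq> S" and "\<forall>i\<in>S. cyc t i \<subseteq> S"
  shows "orbit_partition_on (perm_restrict s S) S = orbit_partition_on (perm_restrict t S) S
    \<longleftrightarrow> (\<forall>i\<in>S. cyc s i = cyc t i)"
proof -
  have "orbit_partition_on (perm_restrict s S) S = orbit_partition_on (perm_restrict t S) S
      \<longleftrightarrow> cyc s ` S = cyc t ` S"
    unfolding orbit_partition_on_def using assms(2,3) cyc_perm_restrict
    by (metis (no_types, lifting) image_cong)
  also have "\<dots> \<longleftrightarrow> (\<forall>i\<in>S. cyc s i = cyc t i)"
  proof
    assume images: "cyc s ` S = cyc t ` S"
    show "\<forall>i\<in>S. cyc s i = cyc t i"
    proof
      fix i assume "i \<in> S"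
      then obtain j where "cyc s i = cyc t j" using images by blast
      then show "cyc s i = cyc t i" using cyc_self[of i s] cyc_eq[OF assms(1)] by metis
    qed
  qed auto
  finally show ?thesis .
qed

theorem proposition3p31:
  fixes M :: "(real^'n::{finite,linorder}) set"
    and \<sigma>s \<sigma> :: "'n \<Rightarrow> 'n"
  assumes "locally_symmetric_C2_submanifold M"
    and "characteristic_perm M \<sigma>s"
    and "\<sigma> permutes UNIV"
    and "\<forall>i. cyc \<sigma> i \<subseteq> UNIV - psupp \<sigma>s \<or> cyc \<sigma> i \<subseteq> psupp \<sigma>s"
  shows "(perm_sim \<sigma> \<sigma>s \<longleftrightarrow>
            (\<forall>i\<in>UNIV - psupp \<sigma>s. \<sigma> i = i) \<and>
            orbit_partition_on (perm_restrict \<sigma> (psupp \<sigma>s)) (psupp \<sigma>s)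
              = orbit_partition_on (perm_restrict \<sigma>s (psupp \<sigma>s)) (psupp \<sigma>s))
       \<and> (perm_prec_sim \<sigma> \<sigma>s \<longleftrightarrow>
            \<not> (\<forall>i\<in>UNIV - psupp \<sigma>s. \<sigma> i = i) \<and>
            orbit_partition_on (perm_restrict \<sigma> (psupp \<sigma>s)) (psupp \<sigma>s)
              = orbit_partition_on (perm_restrict \<sigma>s (psupp \<sigma>s)) (psupp \<sigma>s))"
proof -
  define S where "S = psupp \<sigma>s"
  have \<sigma>s: "\<sigma>s permutes UNIV" using assms(2) by (simp add: characteristic_perm_def)
  have fixed: "\<sigma>s i = i \<longleftrightarrow> i \<notin> S" for i by (simp add: S_def psupp_def)
  have \<sigma>_in_S: "cyc \<sigma> i \<subseteq> S" if "i \<in> S" for i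
    using assms(4) that cyc_self[of i \<sigma>] by (auto simp: S_def)
  have \<sigma>_out_S: "cyc \<sigma> i \<subseteq> - S" if "i \<notin> S" for i
    using assms(4) that cyc_self[of i \<sigma>] by (auto simp: S_def)
  have restrict_eq: "orbit_partition_on (perm_restrict \<sigma> S) S
      = orbit_partition_on (perm_restrict \<sigma>s S) S \<longleftrightarrow> (\<forall>i\<in>S. cyc \<sigma> i = cyc \<sigma>s i)"
    using orbit_partition_on_restrict_eq_iff[OF \<sigma>s] \<sigma>_in_S cyc_subset_psupp[OF \<sigma>s]
    by (simp add: S_def)
  have agree_off_S: "i \<notin> S \<Longrightarrow> cyc \<sigma> i = cyc \<sigma>s i \<longleftrightarrow> \<sigma> i = i" for i
    by (simp add: cyc_eq_at_fixpoint fixed)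
  have agree_or_fixed: "cyc \<sigma> i = cyc \<sigma>s i \<or> (\<forall>j\<in>cyc \<sigma> i. \<sigma>s j = j)
      \<longleftrightarrow> (i \<in> S \<longrightarrow> cyc \<sigma> i = cyc \<sigma>s i)" for i
    using \<sigma>_in_S \<sigma>_out_S cyc_self[of i \<sigma>] by (auto simp: fixed)
  show ?thesis
    unfolding perm_prec_sim_iff_cyc[OF \<sigma>s] perm_sim_iff_cyc_eq[OF \<sigma>s]
      S_def[symmetric] restrict_eq agree_or_fixed
    using agree_off_S by blast
qed

end
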